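(* Let $B=(B,+,0)$ be a unitary magma and $(X,\varphi)$ a $B$-action, with $X$ regarded as a unitary magma via $x+x'=\varphi(x,0,x',0)$ and neutral element $0$. (1) Let $Z$ be a unitary magma and $u\colon X\to Z$, $v\colon B\to Z$ morphisms of unitary magmas. There is at most one morphism $w\colon X\rtimes_\varphi B\to Z$ with $w(x,0)=u(x)$ for all $x\in X$ and $w(0,b)=v(b)$ for all $b\in B$; if it exists, then $w(x,b)=u(x)+v(b)$. Furthermore, the map $w(x,b)=u(x)+v(b)$ is a morphism of unitary magmas from $X\rtimes_\varphi B$ to $Z$ if and only if $$u(\varphi(x,b,x',b'))+v(b+b')=(u(x)+v(b))+(u(x')+v(b'))$$ for all $(x,b),(x',b')\in X\rtimes_\varphi B$. (2) Let $Z$ be a unitary magma, $f\colon Z\to X$ a map with $f(0)=0$, and $g\colon Z\to B$ a morphism of unitary magmas. Then the assignment $z\mapsto(f(z),g(z))$ is a morphism of unitary magmas from $Z$ to $X\rtimes_\varphi B$ if and only if $f(z_1+z_2)=\varphi(f(z_1),g(z_1),f(z_2),g(z_2))$ for all $z_1,z_2\in Z$.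
   Context: A unitary magma is a set with a binary operation $+$ and an element $0$ with $b+0=b=0+b$ for all $b$; morphisms preserve $+$ and $0$. A $B$-action is a pair $(X,\varphi)$ with $X$ a set and $\varphi\colon X\times B\times X\times B\to X$ a map such that: (1) there is an element $0\in X$ with $\varphi(x,0,0,0)=x=\varphi(0,0,x,0)$ for all $x\in X$; (2) $\varphi(x,b,0,0)=\varphi(x,0,0,b)=\varphi(0,0,x,b)$ for all $x\in X,b\in B$; (3) $\varphi(0,b,0,b')=0$ for all $b,b'\in B$; (4) writing $\varphi_{00}(x,b)=\varphi(x,0,0,b)$, for all $x,x'\in X$, $b,b'\in B$: $\varphi(x,b,x',b')=\varphi_{00}\big(\varphi(\varphi_{00}(x,b),b,\varphi_{00}(x',b'),b'),\,b+b'\big)$. The semidirect product $X\rtimes_\varphi B$ is the set $\{(x,b)\in X\times B\mid\varphi(x,0,0,b)=x\}$ with operation $(x,b)+(x',b')=(\varphi(x,b,x',b'),b+b')$ and neutral element $(0,0)$ (it is a unitary magma). *)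

theory Defs
  imports Main
begin

definition unitary_magma :: "'a set \<Rightarrow> ('a \<Rightarrow> 'a \<Rightarrow> 'a) \<Rightarrow> 'a \<Rightarrow> bool" where
  "unitary_magma M add z \<longleftrightarrow>
     z \<in> M \<and> (\<forall>a\<in>M. \<forall>b\<in>M. add a b \<in> M) \<and> (\<forall>b\<in>M. add b z = b \<and> add z b = b)"

definition um_hom :: "'a set \<Rightarrow> ('a \<Rightarrow> 'a \<Rightarrow> 'a) \<Rightarrow> 'a \<Rightarrow>
                      'c set \<Rightarrow> ('c \<Rightarrow> 'c \<Rightarrow> 'c) \<Rightarrow> 'c \<Rightarrow> ('a \<Rightarrow> 'c) \<Rightarrow> bool" where
  "um_hom A addA zA C addC zC h \<longleftrightarrow>
     (\<forall>a\<in>A. h a \<in> C) \<and> h zA = zC \<and> (\<forall>a\<in>A. \<forall>a'\<in>A. h (addA a a') = addC (h a) (h a'))"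

text \<open>A B-action (X, phi) on the unitary magma (B, addB, zB), with distinguished element zX
(the element 0 of axiom (1); it is unique, being a two-sided unit for x+x' = phi x 0 x' 0).\<close>
definition B_action :: "'b set \<Rightarrow> ('b \<Rightarrow> 'b \<Rightarrow> 'b) \<Rightarrow> 'b \<Rightarrow>
                        'x set \<Rightarrow> ('x \<Rightarrow> 'b \<Rightarrow> 'x \<Rightarrow> 'b \<Rightarrow> 'x) \<Rightarrow> 'x \<Rightarrow> bool" where
  "B_action B addB zB X phi zX \<longleftrightarrow>
     (\<forall>x\<in>X. \<forall>b\<in>B. \<forall>x'\<in>X. \<forall>b'\<in>B. phi x b x' b' \<in> X) \<and>
     zX \<in> X \<and>
     (\<forall>x\<in>X. phi x zB zX zB = x \<and> phi zX zB x zB = x) \<and>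
     (\<forall>x\<in>X. \<forall>b\<in>B. phi x b zX zB = phi x zB zX b \<and> phi x zB zX b = phi zX zB x b) \<and>
     (\<forall>b\<in>B. \<forall>b'\<in>B. phi zX b zX b' = zX) \<and>
     (\<forall>x\<in>X. \<forall>b\<in>B. \<forall>x'\<in>X. \<forall>b'\<in>B.
        phi x b x' b' =
        phi (phi (phi x zB zX b) b (phi x' zB zX b') b') zB zX (addB b b'))"

definition act_add :: "'b \<Rightarrow> ('x \<Rightarrow> 'b \<Rightarrow> 'x \<Rightarrow> 'b \<Rightarrow> 'x) \<Rightarrow> 'x \<Rightarrow> 'x \<Rightarrow> 'x" where
  "act_add zB phi x x' = phi x zB x' zB"

definition sdp_carrier :: "'b set \<Rightarrow> 'b \<Rightarrow> 'x set \<Rightarrow> ('x \<Rightarrow> 'b \<Rightarrow> 'x \<Rightarrow> 'b \<Rightarrow> 'x) \<Rightarrow> 'x \<Rightarrow> ('x \<times> 'b) set" where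
  "sdp_carrier B zB X phi zX = {(x, b). x \<in> X \<and> b \<in> B \<and> phi x zB zX b = x}"

definition sdp_add :: "('b \<Rightarrow> 'b \<Rightarrow> 'b) \<Rightarrow> ('x \<Rightarrow> 'b \<Rightarrow> 'x \<Rightarrow> 'b \<Rightarrow> 'x) \<Rightarrow> 'x \<times> 'b \<Rightarrow> 'x \<times> 'b \<Rightarrow> 'x \<times> 'b" where
  "sdp_add addB phi p q = (phi (fst p) (snd p) (fst q) (snd q), addB (snd p) (snd q))"

end

theory Submission
  imports Defs
begin

text \<open>Every element of the semidirect product factors as \<open>(x, b) = (x, 0) + (0, b)\<close>, so a
  morphism out of it is determined by its values on the two factors \<open>X\<close> and \<open>B\<close>, and is
  then given by \<open>u x + v b\<close>. A map \<open>z \<mapsto> (f z, g z)\<close> into the semidirect product is a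
  morphism as soon as it respects the operation: taking \<open>z\<^sub>2 = 0\<close> in that condition gives
  \<open>f z = \<phi>(f z, g z, 0, 0) = \<phi>(f z, 0, 0, g z)\<close>, which is exactly membership in the carrier.\<close>

lemma
  assumes "unitary_magma M add z"
  shows unitary_magma_zero_in: "z \<in> M"
    and unitary_magma_add_closed: "a \<in> M \<Longrightarrow> b \<in> M \<Longrightarrow> add a b \<in> M"
    and unitary_magma_add_zero: "b \<in> M \<Longrightarrow> add b z = b"
    and unitary_magma_zero_add: "b \<in> M \<Longrightarrow> add z b = b"
  using assms unfolding unitary_magma_def by auto

lemma
  assumes "um_hom A addA zA C addC zC h"
  shows um_hom_closed: "a \<in> A \<Longrightarrow> h a \<in> C"
    and um_hom_zero: "h zA = zC"
    and um_hom_add: "a \<in> A \<Longrightarrow> a' \<in> A \<Longrightarrow> h (addA a a') = addC (h a) (h a')"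
  using assms unfolding um_hom_def by auto

lemma
  assumes "B_action B addB zB X phi zX"
  shows B_action_zero_in: "zX \<in> X"
    and B_action_unit: "x \<in> X \<Longrightarrow> phi x zB zX zB = x"
    and B_action_move_right: "x \<in> X \<Longrightarrow> b \<in> B \<Longrightarrow> phi x b zX zB = phi x zB zX b"
    and B_action_zero_zero: "b \<in> B \<Longrightarrow> b' \<in> B \<Longrightarrow> phi zX b zX b' = zX"
  using assms unfolding B_action_def by blast+

lemma mem_sdp_carrier [simp]:
  "(x, b) \<in> sdp_carrier B zB X phi zX \<longleftrightarrow> x \<in> X \<and> b \<in> B \<and> phi x zB zX b = x"
  by (simp add: sdp_carrier_def)

lemma sdp_add_Pair [simp]:
  "sdp_add addB phi (x, b) (x', b') = (phi x b x' b', addB b b')"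
  by (simp add: sdp_add_def)

lemma sdp_carrier_left:
  assumes "B_action B addB zB X phi zX" "zB \<in> B" "x \<in> X"
  shows "(x, zB) \<in> sdp_carrier B zB X phi zX"
  using assms by (simp add: B_action_unit)

lemma sdp_carrier_right:
  assumes "B_action B addB zB X phi zX" "zB \<in> B" "b \<in> B"
  shows "(zX, b) \<in> sdp_carrier B zB X phi zX"
  using assms by (simp add: B_action_zero_in B_action_zero_zero)

lemma sdp_carrierI:
  assumes "B_action B addB zB X phi zX" "x \<in> X" "b \<in> B" "phi x b zX zB = x"
  shows "(x, b) \<in> sdp_carrier B zB X phi zX"
  using assms B_action_move_right[OF assms(1-3)] by simp

lemma sdp_factor:
  assumes "(x, b) \<in> sdp_carrier B zB X phi zX" "addB zB b = b"
  shows "sdp_add addB phi (x, zB) (zX, b) = (x, b)"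
  using assms by simp

lemma sdp_hom_eq_sum:
  assumes B: "unitary_magma B addB zB" and act: "B_action B addB zB X phi zX"
    and w: "um_hom (sdp_carrier B zB X phi zX) (sdp_add addB phi) (zX, zB) Z addZ zZ w"
    and wu: "\<forall>x\<in>X. w (x, zB) = u x" and wv: "\<forall>b\<in>B. w (zX, b) = v b"
    and xb: "(x, b) \<in> sdp_carrier B zB X phi zX"
  shows "w (x, b) = addZ (u x) (v b)"
proof -
  have x: "x \<in> X" and b: "b \<in> B" using xb by auto
  have zB: "zB \<in> B" using B by (rule unitary_magma_zero_in)
  have "w (x, b) = w (sdp_add addB phi (x, zB) (zX, b))"
    using sdp_factor[where addB = addB, OF xb unitary_magma_zero_add[OF B b]] by simp
  also have "\<dots> = addZ (w (x, zB)) (w (zX, b))"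
    using um_hom_add[OF w sdp_carrier_left[OF act zB x] sdp_carrier_right[OF act zB b]] .
  finally show ?thesis using wu wv x b by simp
qed

lemma sdp_hom_unique:
  assumes B: "unitary_magma B addB zB" and act: "B_action B addB zB X phi zX"
    and w: "um_hom (sdp_carrier B zB X phi zX) (sdp_add addB phi) (zX, zB) Z addZ zZ w"
    and wu: "\<forall>x\<in>X. w (x, zB) = u x" and wv: "\<forall>b\<in>B. w (zX, b) = v b"
    and w': "um_hom (sdp_carrier B zB X phi zX) (sdp_add addB phi) (zX, zB) Z addZ zZ w'"
    and w'u: "\<forall>x\<in>X. w' (x, zB) = u x" and w'v: "\<forall>b\<in>B. w' (zX, b) = v b"
  shows "\<forall>p\<in>sdp_carrier B zB X phi zX. w p = w' p"
proof (intro ballI, clarify)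
  fix x b assume xb: "(x, b) \<in> sdp_carrier B zB X phi zX"
  have "w (x, b) = addZ (u x) (v b)" by (rule sdp_hom_eq_sum[OF B act w wu wv xb])
  also have "\<dots> = w' (x, b)" by (rule sdp_hom_eq_sum[OF B act w' w'u w'v xb, symmetric])
  finally show "w (x, b) = w' (x, b)" .
qed

lemma sdp_sum_hom_iff:
  assumes Z: "unitary_magma Z addZ zZ"
    and u: "\<And>x. x \<in> X \<Longrightarrow> u x \<in> Z" "u zX = zZ"
    and v: "\<And>b. b \<in> B \<Longrightarrow> v b \<in> Z" "v zB = zZ"
  shows "um_hom (sdp_carrier B zB X phi zX) (sdp_add addB phi) (zX, zB) Z addZ zZ
           (\<lambda>(x, b). addZ (u x) (v b))
    \<longleftrightarrow> (\<forall>(x, b)\<in>sdp_carrier B zB X phi zX. \<forall>(x', b')\<in>sdp_carrier B zB X phi zX.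
           addZ (u (phi x b x' b')) (v (addB b b')) = addZ (addZ (u x) (v b)) (addZ (u x') (v b')))"
proof -
  have "\<forall>(x, b)\<in>sdp_carrier B zB X phi zX. addZ (u x) (v b) \<in> Z"
    using u v unitary_magma_add_closed[OF Z] by auto
  moreover have "addZ (u zX) (v zB) = zZ"
    using u v unitary_magma_add_zero[OF Z unitary_magma_zero_in[OF Z]] by simp
  ultimately show ?thesis
    unfolding um_hom_def by (simp add: sdp_add_def case_prod_unfold)
qed

lemma pair_sdp_hom_iff:
  assumes Z: "unitary_magma Z addZ zZ" and act: "B_action B addB zB X phi zX"
    and f: "\<forall>z\<in>Z. f z \<in> X" "f zZ = zX" and g: "um_hom Z addZ zZ B addB zB g"
  shows "um_hom Z addZ zZ (sdp_carrier B zB X phi zX) (sdp_add addB phi) (zX, zB) (\<lambda>z. (f z, g z))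
    \<longleftrightarrow> (\<forall>z1\<in>Z. \<forall>z2\<in>Z. f (addZ z1 z2) = phi (f z1) (g z1) (f z2) (g z2))"
proof
  assume "um_hom Z addZ zZ (sdp_carrier B zB X phi zX) (sdp_add addB phi) (zX, zB) (\<lambda>z. (f z, g z))"
  then show "\<forall>z1\<in>Z. \<forall>z2\<in>Z. f (addZ z1 z2) = phi (f z1) (g z1) (f z2) (g z2)"
    by (auto dest: um_hom_add)
next
  assume hom: "\<forall>z1\<in>Z. \<forall>z2\<in>Z. f (addZ z1 z2) = phi (f z1) (g z1) (f z2) (g z2)"
  have "(f z, g z) \<in> sdp_carrier B zB X phi zX" if z: "z \<in> Z" for z
  proof (rule sdp_carrierI[OF act])
    have zZ: "zZ \<in> Z" using Z by (rule unitary_magma_zero_in)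
    have "f z = f (addZ z zZ)" using unitary_magma_add_zero[OF Z z] by simp
    also have "\<dots> = phi (f z) (g z) zX zB" using hom z zZ f um_hom_zero[OF g] by simp
    finally show "phi (f z) (g z) zX zB = f z" by simp
  qed (use f z um_hom_closed[OF g] in auto)
  then show "um_hom Z addZ zZ (sdp_carrier B zB X phi zX) (sdp_add addB phi) (zX, zB) (\<lambda>z. (f z, g z))"
    unfolding um_hom_def using hom f um_hom_zero[OF g] um_hom_add[OF g] by simp
qed

theorem proposition4p2:
  fixes B :: "'b set" and addB :: "'b \<Rightarrow> 'b \<Rightarrow> 'b" and zB :: 'b
    and X :: "'x set" and phi :: "'x \<Rightarrow> 'b \<Rightarrow> 'x \<Rightarrow> 'b \<Rightarrow> 'x" and zX :: 'x
  assumes B: "unitary_magma B addB zB"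
    and act: "B_action B addB zB X phi zX"
  shows
    "(\<forall>(Z :: 'z set) addZ zZ u v.
        unitary_magma Z addZ zZ \<and>
        um_hom X (act_add zB phi) zX Z addZ zZ u \<and>
        um_hom B addB zB Z addZ zZ v \<longrightarrow>
        ((\<forall>w w'.
            (um_hom (sdp_carrier B zB X phi zX) (sdp_add addB phi) (zX, zB) Z addZ zZ w \<and>
             (\<forall>x\<in>X. w (x, zB) = u x) \<and> (\<forall>b\<in>B. w (zX, b) = v b)) \<and>
            (um_hom (sdp_carrier B zB X phi zX) (sdp_add addB phi) (zX, zB) Z addZ zZ w' \<and>
             (\<forall>x\<in>X. w' (x, zB) = u x) \<and> (\<forall>b\<in>B. w' (zX, b) = v b))
            \<longrightarrow> (\<forall>p\<in>sdp_carrier B zB X phi zX. w p = w' p)) \<and>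
         (\<forall>w. um_hom (sdp_carrier B zB X phi zX) (sdp_add addB phi) (zX, zB) Z addZ zZ w \<and>
              (\<forall>x\<in>X. w (x, zB) = u x) \<and> (\<forall>b\<in>B. w (zX, b) = v b)
            \<longrightarrow> (\<forall>(x, b)\<in>sdp_carrier B zB X phi zX. w (x, b) = addZ (u x) (v b))) \<and>
         (um_hom (sdp_carrier B zB X phi zX) (sdp_add addB phi) (zX, zB) Z addZ zZ
              (\<lambda>(x, b). addZ (u x) (v b))
          \<longleftrightarrow>
          (\<forall>(x, b)\<in>sdp_carrier B zB X phi zX. \<forall>(x', b')\<in>sdp_carrier B zB X phi zX.
              addZ (u (phi x b x' b')) (v (addB b b')) =
              addZ (addZ (u x) (v b)) (addZ (u x') (v b'))))))
     \<and>
     (\<forall>(Z :: 'w set) addZ zZ f g.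
        unitary_magma Z addZ zZ \<and>
        (\<forall>z\<in>Z. f z \<in> X) \<and> f zZ = zX \<and>
        um_hom Z addZ zZ B addB zB g \<longrightarrow>
        (um_hom Z addZ zZ (sdp_carrier B zB X phi zX) (sdp_add addB phi) (zX, zB)
            (\<lambda>z. (f z, g z))
         \<longleftrightarrow> (\<forall>z1\<in>Z. \<forall>z2\<in>Z. f (addZ z1 z2) = phi (f z1) (g z1) (f z2) (g z2))))"
  apply (intro conjI allI impI; elim conjE)
  subgoal by (rule sdp_hom_unique[OF B act])
  subgoal by (auto intro: sdp_hom_eq_sum[OF B act])
  subgoal by (rule sdp_sum_hom_iff) (auto intro: um_hom_closed um_hom_zero)
  subgoal by (rule pair_sdp_hom_iff[OF _ act])
  done

end
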